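(* Let $A$ be an associative (not necessarily unital) algebra over a field $F$, let $q\in F$ with $q\ne 1$, and let $\sigma\in S_n$ satisfy $\sigma(1)\neq 1$ and $\sigma(n)\neq n$. If $A$ satisfies the identity $x_1\cdots x_n=q\,x_{\sigma(1)}\cdots x_{\sigma(n)}$, then $A$ is eventually commutative, i.e. there is some $k$ such that $A$ satisfies $x_1\cdots x_k=x_{\tau(1)}\cdots x_{\tau(k)}$ for all $\tau\in S_k$.
   Context: An identity is satisfied by $A$ if it holds upon substituting arbitrary elements of $A$ for the variables. *)

theory Defs
  imports "HOL-Combinatorics.Permutations"
begin

definition algebra_over :: "('f::field \<Rightarrow> 'a::ring \<Rightarrow> 'a) \<Rightarrow> bool" where
  "algebra_over smult \<longleftrightarrow>
     (\<forall>a b x. smult (a + b) x = smult a x + smult b x) \<and>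
     (\<forall>a x y. smult a (x + y) = smult a x + smult a y) \<and>
     (\<forall>a b x. smult (a * b) x = smult a (smult b x)) \<and>
     (\<forall>x. smult 1 x = x) \<and>
     (\<forall>a x y. smult a (x * y) = smult a x * y) \<and>
     (\<forall>a x y. smult a (x * y) = x * smult a y)"

text \<open>Ordered product x_{i1} * ... * x_{ik} of a nonempty word of indices
  (the empty word is only a filler case and is never used).\<close>
fun wprod :: "(nat \<Rightarrow> 'a::semigroup_mult) \<Rightarrow> nat list \<Rightarrow> 'a" where
  "wprod x [] = undefined"
| "wprod x [i] = x i"
| "wprod x (i # j # is) = x i * wprod x (j # is)"

end

theory Submission
  imports Defs
begin

text \<open>Substituting \<open>x\<^sub>n := x\<^sub>n y\<close> (resp. \<open>x\<^sub>1 := y x\<^sub>1\<close>) into the identity and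
  cancelling \<open>q\<close> shows that a factor \<open>y\<close> multiplied onto an \<open>n\<close>-fold product from the right
  (resp. left) can be absorbed into the factor at position \<open>\<sigma>\<^sup>-\<^sup>1(n)\<close> (resp. \<open>\<sigma>\<^sup>-\<^sup>1(1)\<close>),
  which is not the last (resp. first) one. Grouping a longer word into \<open>n\<close> blocks, the last
  letter of a word can therefore jump inwards, and two such jumps exchange two letters that are
  more than \<open>n\<close> positions apart and preceded by at least \<open>n\<close> letters; dually on the left.
  In words of length \<open>4n + 3\<close> these far transpositions generate all transpositions by
  conjugation, hence all permutations. If \<open>q = 0\<close>, all \<open>n\<close>-fold products vanish.\<close>

fun prod_list1 :: "'a::semigroup_mult list \<Rightarrow> 'a" where
  "prod_list1 [] = undefined"
| "prod_list1 [a] = a"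
| "prod_list1 (a # b # xs) = a * prod_list1 (b # xs)"

lemma wprod_eq_prod_list1: "wprod x l = prod_list1 (map x l)"
  by (induction x l rule: wprod.induct) auto

lemma wprod_map: "wprod x (map f l) = wprod (x \<circ> f) l"
  by (simp add: wprod_eq_prod_list1)

lemma wprod_cong: "(\<And>i. i \<in> set l \<Longrightarrow> x i = y i) \<Longrightarrow> wprod x l = wprod y l"
  by (simp add: wprod_eq_prod_list1 cong: map_cong)

lemma prod_list1_Cons: "xs \<noteq> [] \<Longrightarrow> prod_list1 (a # xs) = a * prod_list1 xs"
  by (cases xs) auto

lemma prod_list1_append:
  "xs \<noteq> [] \<Longrightarrow> ys \<noteq> [] \<Longrightarrow> prod_list1 (xs @ ys) = prod_list1 xs * prod_list1 ys"
  by (induction xs rule: induct_list012) (auto simp: prod_list1_Cons mult.assoc)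

lemma prod_list1_flatten:
  assumes "ys \<noteq> []"
  shows "prod_list1 (xs @ prod_list1 ys # zs) = prod_list1 (xs @ ys @ zs)"
proof -
  from assms have "prod_list1 (prod_list1 ys # zs) = prod_list1 (ys @ zs)"
    by (cases "zs = []") (auto simp: prod_list1_Cons prod_list1_append)
  with assms show ?thesis
    by (induction xs rule: induct_list012) (auto simp: prod_list1_Cons)
qed

lemma prod_list1_move_last_inward:
  fixes y :: "'a::semigroup_mult"
  assumes right_absorb:
      "\<And>ws (z::'a). length ws = n \<Longrightarrow> prod_list1 ws * z = prod_list1 (ws[j := ws ! j * z])"
    and j: "j + 1 < n" and U: "j < length U" and V: "n - 1 - j \<le> length V"
  shows "prod_list1 (U @ V @ [y]) = prod_list1 (U @ y # V)"
proof -
  obtain A U' where U': "U = A @ U'" "length A = j" "U' \<noteq> []"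
    using U by (intro that[of "take j U" "drop j U"]) auto
  obtain B V' where V': "V = B @ V'" "length B = n - 2 - j" "V' \<noteq> []"
    using V j by (intro that[of "take (n - 2 - j) V" "drop (n - 2 - j) V"]) auto
  define ws where "ws = A @ prod_list1 U' # B @ [prod_list1 V']"
  have "length ws = n" using U' V' j by (simp add: ws_def)
  have flatten: "prod_list1 (A @ u # B @ [prod_list1 V']) = prod_list1 (A @ [u] @ B @ V')" for u
    using prod_list1_flatten[of V' "A @ u # B" "[]"] \<open>V' \<noteq> []\<close> by simp
  have "prod_list1 (U @ V @ [y]) = prod_list1 (U @ V) * y"
    using prod_list1_append[of "U @ V" "[y]"] U' by simp
  also have "prod_list1 (U @ V) = prod_list1 ws"
    using flatten[of "prod_list1 U'"] prod_list1_flatten[of U' A "B @ V'"] U' V' by (simp add: ws_def)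
  also have "prod_list1 ws * y = prod_list1 (ws[j := ws ! j * y])"
    by (rule right_absorb) fact
  also have "ws[j := ws ! j * y] = A @ prod_list1 (U' @ [y]) # B @ [prod_list1 V']"
    using U' by (simp add: ws_def list_update_append nth_append prod_list1_append)
  also have "prod_list1 \<dots> = prod_list1 (U @ y # V)"
    using flatten prod_list1_flatten[of "U' @ [y]" A "B @ V'"] U' V' by simp
  finally show ?thesis .
qed

lemma prod_list1_far_swap_long_prefix:
  fixes b c :: "'a::semigroup_mult"
  assumes right_absorb:
      "\<And>ws (z::'a). length ws = n \<Longrightarrow> prod_list1 ws * z = prod_list1 (ws[j := ws ! j * z])"
    and j: "j + 1 < n" and P: "n \<le> length P" and M: "n \<le> length M"
  shows "prod_list1 (P @ b # M @ c # S) = prod_list1 (P @ c # M @ b # S)"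
proof -
  have "prod_list1 (P @ b # M @ [c]) = prod_list1 (P @ c # b # M)"
    using prod_list1_move_last_inward[OF right_absorb j, of P "b # M"] j P M by simp
  also have "\<dots> = prod_list1 (P @ c # M @ [b])"
    using prod_list1_move_last_inward[OF right_absorb j, of "P @ [c]" M] j P M by simp
  finally have swap: "prod_list1 (P @ b # M @ [c]) = prod_list1 (P @ c # M @ [b])" .
  show ?thesis
  proof (cases "S = []")
    case False
    then show ?thesis
      using swap prod_list1_append[of "P @ b # M @ [c]" S] prod_list1_append[of "P @ c # M @ [b]" S]
      by simp
  qed (use swap in simp)
qed

text \<open>Statements about left absorption are reduced to the right-handed ones by passing to the
  opposite semigroup and reversing words.\<close>

datatype 'a opposite = Opposite (unopposite: 'a)

instantiation opposite :: (semigroup_mult) semigroup_mult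
begin

definition times_opposite :: "'a opposite \<Rightarrow> 'a opposite \<Rightarrow> 'a opposite" where
  "x * y = Opposite (unopposite y * unopposite x)"

instance by standard (simp add: times_opposite_def mult.assoc)

end

lemma prod_list1_opposite:
  "xs \<noteq> [] \<Longrightarrow> prod_list1 (map Opposite (rev xs)) = Opposite (prod_list1 xs)"
proof (induction xs)
  case (Cons a xs)
  then show ?case
    by (cases "xs = []") (auto simp: prod_list1_append prod_list1_Cons times_opposite_def)
qed simp

lemma prod_list1_far_swap_long_suffix:
  fixes b c :: "'a::semigroup_mult"
  assumes left_absorb:
      "\<And>ws (z::'a). length ws = n \<Longrightarrow> z * prod_list1 ws = prod_list1 (ws[i := z * ws ! i])"
    and i: "0 < i" "i < n" and M: "n \<le> length M" and S: "n \<le> length S"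
  shows "prod_list1 (P @ b # M @ c # S) = prod_list1 (P @ c # M @ b # S)"
proof -
  have right_absorb_opposite:
      "prod_list1 ws * y = prod_list1 (ws[n - 1 - i := ws ! (n - 1 - i) * y])"
    if "length ws = n" for ws :: "'a opposite list" and y
  proof -
    define vs where "vs = rev (map unopposite ws)"
    have ws: "ws = map Opposite (rev vs)" and vs: "length vs = n" "vs \<noteq> []"
      using that i by (auto simp: vs_def rev_map comp_def)
    have "prod_list1 ws * y = Opposite (unopposite y * prod_list1 vs)"
      using vs by (simp add: ws prod_list1_opposite times_opposite_def)
    also have "\<dots> = Opposite (prod_list1 (vs[i := unopposite y * vs ! i]))"
      using left_absorb vs by simp
    also have "\<dots> = prod_list1 (map Opposite (rev (vs[i := unopposite y * vs ! i])))"
      using vs by (simp add: prod_list1_opposite)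
    also have "\<dots> = prod_list1 (ws[n - 1 - i := ws ! (n - 1 - i) * y])"
      using vs i by (simp add: ws rev_update map_update rev_nth times_opposite_def)
    finally show ?thesis .
  qed
  have "prod_list1 (map Opposite (rev (P @ b # M @ c # S)))
      = prod_list1 (map Opposite (rev (P @ c # M @ b # S)))"
    using prod_list1_far_swap_long_prefix[OF right_absorb_opposite, where P = "map Opposite (rev S)"
        and M = "map Opposite (rev M)" and b = "Opposite c" and c = "Opposite b"
        and S = "map Opposite (rev P)"] i M S
    by simp
  then show ?thesis
    using prod_list1_opposite[of "P @ b # M @ c # S"] prod_list1_opposite[of "P @ c # M @ b # S"]
    by simp
qed

lemma permutes_in_if_star_transpositions:
  assumes "finite S" "m \<in> S" and "id \<in> G"
    and comp: "\<And>f g. f \<in> G \<Longrightarrow> g \<in> G \<Longrightarrow> f \<circ> g \<in> G"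
    and star: "\<And>a. a \<in> S \<Longrightarrow> a \<noteq> m \<Longrightarrow> transpose a m \<in> G"
    and "\<tau> permutes S"
  shows "\<tau> \<in> G"
  using assms(6,1)
proof (induction rule: permutes_induct)
  case (swap a b p)
  have "transpose a b \<in> G"
  proof (cases "a = m \<or> b = m")
    case True
    then show ?thesis using star swap.hyps by (auto simp: transpose_commute)
  next
    case False
    then have "transpose a b = transpose a m \<circ> transpose m b \<circ> transpose a m"
      using swap.hyps by (intro transpose_comp_triple[symmetric]) auto
    then show ?thesis using comp star False swap.hyps by (simp add: transpose_commute)
  qed
  then show ?case using comp swap.IH by blast
qed (fact \<open>id \<in> G\<close>)

lemma wprod_transpose_far:
  fixes x :: "nat \<Rightarrow> 'a::semigroup_mult"
  assumes far_swap: "\<And>P b M c S. n \<le> length M \<Longrightarrow> n \<le> length P \<or> n \<le> length S \<Longrightarrow>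
        prod_list1 (P @ b # M @ (c::'a) # S) = prod_list1 (P @ c # M @ b # S)"
    and pr: "1 \<le> p" "p + n < r" "r \<le> L" and margin: "n < p \<or> r + n \<le> L"
  shows "wprod (x \<circ> transpose p r) [1..<Suc L] = wprod x [1..<Suc L]"
proof -
  have upt_split: "[i..<k] = [i..<j] @ j # [Suc j..<k]" if "i \<le> j" "j < k" for i j k :: nat
    using upt_add_eq_append[of i j "k - j"] upt_conv_Cons[of j k] that by simp
  have indices: "[1..<Suc L] = [1..<p] @ p # [Suc p..<r] @ r # [Suc r..<Suc L]"
    using upt_split[of 1 p "Suc L"] upt_split[of "Suc p" r "Suc L"] pr by simp
  have fixed: "map (x \<circ> transpose p r) [i..<k] = map x [i..<k]"
    if "p \<notin> {i..<k}" "r \<notin> {i..<k}" for i k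
    using that by (auto simp: map_eq_conv)
  define P M S where "P = map x [1..<p]" and "M = map x [Suc p..<r]" and "S = map x [Suc r..<Suc L]"
  have "wprod (x \<circ> transpose p r) [1..<Suc L] = prod_list1 (P @ x r # M @ x p # S)"
    unfolding wprod_eq_prod_list1 indices P_def M_def S_def using pr
    by (simp add: fixed del: upt_Suc)
  also have "\<dots> = prod_list1 (P @ x p # M @ x r # S)"
    using pr margin by (intro far_swap) (auto simp: P_def M_def S_def)
  also have "\<dots> = wprod x [1..<Suc L]"
    unfolding wprod_eq_prod_list1 indices P_def M_def S_def by (simp del: upt_Suc)
  finally show ?thesis .
qed

lemma wprod_permutes_invariant:
  fixes x :: "nat \<Rightarrow> 'a::semigroup_mult"
  assumes far_swap: "\<And>P b M c S. n \<le> length M \<Longrightarrow> n \<le> length P \<or> n \<le> length S \<Longrightarrow>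
        prod_list1 (P @ b # M @ (c::'a) # S) = prod_list1 (P @ c # M @ b # S)"
    and \<tau>: "\<tau> permutes {1..4 * n + 3}"
  shows "wprod (x \<circ> \<tau>) [1..<Suc (4 * n + 3)] = wprod x [1..<Suc (4 * n + 3)]"
proof -
  define L where "L = 4 * n + 3"
  define m where "m = 2 * n + 2"
  \<comment> \<open>Each \<open>transpose p m\<close> is far, or equals \<open>(1 p)(1 m)(1 p)\<close> with both factors far.\<close>
  define G where "G = {\<tau>. \<forall>x :: nat \<Rightarrow> 'a. wprod (x \<circ> \<tau>) [1..<Suc L] = wprod x [1..<Suc L]}"
  have comp: "f \<circ> g \<in> G" if "f \<in> G" "g \<in> G" for f g
    using that by (simp add: G_def o_assoc del: upt_Suc)
  have far: "transpose p r \<in> G" if "1 \<le> p" "p + n < r" "r \<le> L" "n < p \<or> r + n \<le> L" for p r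
    using wprod_transpose_far[OF far_swap that] by (simp add: G_def del: upt_Suc)
  have star: "transpose p m \<in> G" if "p \<in> {1..L}" "p \<noteq> m" for p
  proof -
    consider "p \<le> n + 1" | "3 * n + 3 \<le> p" | "n + 1 < p" "p < 3 * n + 3" by linarith
    then show ?thesis
    proof cases
      case 1
      then show ?thesis using far[of p m] that by (simp add: L_def m_def)
    next
      case 2
      then show ?thesis using far[of m p] that by (simp add: L_def m_def transpose_commute)
    next
      case 3
      have "transpose p m = transpose p 1 \<circ> transpose 1 m \<circ> transpose p 1"
        using that by (simp add: transpose_comp_triple m_def)
      moreover have "transpose 1 p \<in> G" "transpose 1 m \<in> G"
        using far 3 that by (auto simp: L_def m_def)
      ultimately show ?thesis using comp by (simp add: transpose_commute)
    qed
  qed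
  have "\<tau> \<in> G"
    by (rule permutes_in_if_star_transpositions[of "{1..L}" m])
      (use comp star \<tau> in \<open>auto simp: G_def L_def m_def simp del: upt_Suc\<close>)
  then show ?thesis by (simp add: G_def L_def del: upt_Suc)
qed

lemma algebra_over_smult_zero:
  assumes "algebra_over smult"
  shows "smult 0 u = 0"
proof -
  have "smult (0 + 0) u = smult 0 u + smult 0 u"
    using assms unfolding algebra_over_def by blast
  then show ?thesis by simp
qed

lemma algebra_over_smult_cancel:
  assumes alg: "algebra_over smult" and "q \<noteq> 0" and "smult q u = smult q v"
  shows "u = v"
proof -
  have mult: "smult (a * b) w = smult a (smult b w)" for a b w
    using alg unfolding algebra_over_def by simp
  have one: "smult 1 w = w" for w
    using alg unfolding algebra_over_def by simp
  have inverse: "smult (inverse q) (smult q w) = w" for w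
  proof -
    have "smult (inverse q) (smult q w) = smult (inverse q * q) w" by (simp add: mult)
    also have "\<dots> = w" using \<open>q \<noteq> 0\<close> by (simp add: one)
    finally show ?thesis .
  qed
  show ?thesis by (metis inverse \<open>smult q u = smult q v\<close>)
qed

lemma wprod_nth_upt: "wprod (\<lambda>i. ws ! (i - 1)) [1..<Suc (length ws)] = prod_list1 ws"
proof -
  have "map (\<lambda>i. ws ! (i - 1)) [1..<Suc (length ws)] = ws"
    by (simp add: map_Suc_upt[symmetric] comp_def map_nth del: upt_Suc)
  then show ?thesis by (simp add: wprod_eq_prod_list1 del: upt_Suc)
qed

lemma wprod_nth_upt_update:
  assumes "k \<in> {1..length ws}"
  shows "wprod ((\<lambda>i. ws ! (i - 1))(k := v)) [1..<Suc (length ws)] = prod_list1 (ws[k - 1 := v])"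
proof -
  have "wprod ((\<lambda>i. ws ! (i - 1))(k := v)) [1..<Suc (length ws)]
      = wprod (\<lambda>i. ws[k - 1 := v] ! (i - 1)) [1..<Suc (length ws)]"
    using assms by (intro wprod_cong) (auto simp: nth_list_update)
  then show ?thesis using wprod_nth_upt[of "ws[k - 1 := v]"] by simp
qed

lemma wprod_upt_update_last:
  "1 \<le> n \<Longrightarrow> wprod (z(n := z n * y)) [1..<Suc n] = wprod z [1..<Suc n] * y"
  by (cases "n = 1") (auto simp: wprod_eq_prod_list1 prod_list1_append mult.assoc)

lemma wprod_upt_update_first:
  assumes "1 \<le> n"
  shows "wprod (z(1 := y * z 1)) [1..<Suc n] = y * wprod z [1..<Suc n]"
proof -
  have "[1..<Suc n] = 1 # [Suc 1..<Suc n]" using assms by (simp add: upt_conv_Cons)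
  then show ?thesis
    by (cases "n = 1") (auto simp: wprod_eq_prod_list1 prod_list1_Cons mult.assoc)
qed

lemma identity_transports_substitution:
  fixes smult :: "'f::field \<Rightarrow> 'a::ring \<Rightarrow> 'a"
  assumes alg: "algebra_over smult" and q: "q \<noteq> 0" and perm: "\<sigma> permutes {1..n}"
    and ident: "\<forall>x :: nat \<Rightarrow> 'a.
                  wprod x [1..<Suc n] = smult q (wprod x (map \<sigma> [1..<Suc n]))"
    and subst: "\<And>z. wprod (z(k := g (z k))) [1..<Suc n] = h (wprod z [1..<Suc n])"
    and h_smult: "\<And>a. h (smult q a) = smult q (h a)"
  shows "h (wprod x [1..<Suc n]) = wprod (x(inv \<sigma> k := g (x (inv \<sigma> k)))) [1..<Suc n]"
proof -
  define z where "z = x \<circ> inv \<sigma>"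
  have x: "z \<circ> \<sigma> = x"
    using permutes_inv_o(2)[OF perm] by (simp add: z_def o_assoc[symmetric])
  have x': "z(k := g (z k)) \<circ> \<sigma> = x(inv \<sigma> k := g (x (inv \<sigma> k)))"
  proof
    fix i
    show "(z(k := g (z k)) \<circ> \<sigma>) i = (x(inv \<sigma> k := g (x (inv \<sigma> k)))) i"
      using permutes_inv_eq[OF perm, of k i] by (auto simp: z_def permutes_inverses(2)[OF perm])
  qed
  have "smult q (h (wprod x [1..<Suc n])) = h (wprod z [1..<Suc n])"
    using ident[rule_format, of z] x by (simp add: h_smult wprod_map del: upt_Suc)
  also have "\<dots> = wprod (z(k := g (z k))) [1..<Suc n]"
    by (rule subst[symmetric])
  also have "\<dots> = smult q (wprod (x(inv \<sigma> k := g (x (inv \<sigma> k)))) [1..<Suc n])"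
    using ident[rule_format, of "z(k := g (z k))"] x' by (simp add: wprod_map del: upt_Suc)
  finally show ?thesis
    using algebra_over_smult_cancel[OF alg q] by blast
qed

lemma identity_right_absorption:
  fixes smult :: "'f::field \<Rightarrow> 'a::ring \<Rightarrow> 'a" and ws :: "'a list" and y :: 'a
  assumes alg: "algebra_over smult" and q: "q \<noteq> 0" and perm: "\<sigma> permutes {1..n}"
    and ident: "\<forall>x :: nat \<Rightarrow> 'a.
                  wprod x [1..<Suc n] = smult q (wprod x (map \<sigma> [1..<Suc n]))"
    and "1 \<le> n" and "length ws = n"
  shows "prod_list1 ws * y = prod_list1 (ws[inv \<sigma> n - 1 := ws ! (inv \<sigma> n - 1) * y])"
proof -
  have "inv \<sigma> n \<in> {1..n}"
    using permutes_in_image[OF permutes_inv[OF perm]] \<open>1 \<le> n\<close> by simp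
  have "wprod x [1..<Suc n] * y = wprod (x(inv \<sigma> n := x (inv \<sigma> n) * y)) [1..<Suc n]" for x
  proof (rule identity_transports_substitution[OF alg q perm ident,
        where g = "\<lambda>a. a * y" and h = "\<lambda>a. a * y"])
    show "wprod (z(n := z n * y)) [1..<Suc n] = wprod z [1..<Suc n] * y" for z
      using \<open>1 \<le> n\<close> by (rule wprod_upt_update_last)
    show "smult q a * y = smult q (a * y)" for a
      using alg unfolding algebra_over_def by simp
  qed
  from this[of "\<lambda>i. ws ! (i - 1)"] show ?thesis
    using wprod_nth_upt[of ws] wprod_nth_upt_update[of "inv \<sigma> n" ws] \<open>inv \<sigma> n \<in> {1..n}\<close>
      \<open>length ws = n\<close> by simp
qed

lemma identity_left_absorption:
  fixes smult :: "'f::field \<Rightarrow> 'a::ring \<Rightarrow> 'a" and ws :: "'a list" and y :: 'a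
  assumes alg: "algebra_over smult" and q: "q \<noteq> 0" and perm: "\<sigma> permutes {1..n}"
    and ident: "\<forall>x :: nat \<Rightarrow> 'a.
                  wprod x [1..<Suc n] = smult q (wprod x (map \<sigma> [1..<Suc n]))"
    and "1 \<le> n" and "length ws = n"
  shows "y * prod_list1 ws = prod_list1 (ws[inv \<sigma> 1 - 1 := y * ws ! (inv \<sigma> 1 - 1)])"
proof -
  have "inv \<sigma> 1 \<in> {1..n}"
    using permutes_in_image[OF permutes_inv[OF perm]] \<open>1 \<le> n\<close> by simp
  have "y * wprod x [1..<Suc n] = wprod (x(inv \<sigma> 1 := y * x (inv \<sigma> 1))) [1..<Suc n]" for x
  proof (rule identity_transports_substitution[OF alg q perm ident,
        where g = "\<lambda>a. y * a" and h = "\<lambda>a. y * a"])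
    show "wprod (z(1 := y * z 1)) [1..<Suc n] = y * wprod z [1..<Suc n]" for z
      using \<open>1 \<le> n\<close> by (rule wprod_upt_update_first)
    show "y * smult q a = smult q (y * a)" for a
      using alg unfolding algebra_over_def by metis
  qed
  from this[of "\<lambda>i. ws ! (i - 1)"] show ?thesis
    using wprod_nth_upt[of ws] wprod_nth_upt_update[of "inv \<sigma> 1" ws] \<open>inv \<sigma> 1 \<in> {1..n}\<close>
      \<open>length ws = n\<close> by simp
qed

lemma identity_far_swap:
  fixes smult :: "'f::field \<Rightarrow> 'a::ring \<Rightarrow> 'a" and P M S :: "'a list"
  assumes alg: "algebra_over smult" and q: "q \<noteq> 0" and perm: "\<sigma> permutes {1..n}"
    and s1: "\<sigma> 1 \<noteq> 1" and sn: "\<sigma> n \<noteq> n"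
    and ident: "\<forall>x :: nat \<Rightarrow> 'a.
                  wprod x [1..<Suc n] = smult q (wprod x (map \<sigma> [1..<Suc n]))"
    and M: "n \<le> length M" and PS: "n \<le> length P \<or> n \<le> length S"
  shows "prod_list1 (P @ b # M @ c # S) = prod_list1 (P @ c # M @ b # S)"
proof -
  define j i where "j = inv \<sigma> n - 1" and "i = inv \<sigma> 1 - 1"
  have "1 \<le> n" using permutes_not_in[OF perm, of 1] s1 by auto
  then have "inv \<sigma> n \<in> {1..n}" "inv \<sigma> 1 \<in> {1..n}"
    using permutes_in_image[OF permutes_inv[OF perm]] by auto
  moreover have "inv \<sigma> n \<noteq> n" "inv \<sigma> 1 \<noteq> 1"
    using sn s1 permutes_inverses(1)[OF perm] by metis+
  ultimately have j: "j + 1 < n" and i: "0 < i" "i < n"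
    by (auto simp: i_def j_def)
  have right_absorb: "prod_list1 ws * y = prod_list1 (ws[j := ws ! j * y])"
    if "length ws = n" for ws :: "'a list" and y
    using identity_right_absorption[OF alg q perm ident \<open>1 \<le> n\<close> that] by (simp add: j_def)
  have left_absorb: "y * prod_list1 ws = prod_list1 (ws[i := y * ws ! i])"
    if "length ws = n" for ws :: "'a list" and y
    using identity_left_absorption[OF alg q perm ident \<open>1 \<le> n\<close> that] by (simp add: i_def)
  from PS show ?thesis
  proof
    assume "n \<le> length P"
    then show ?thesis
      using prod_list1_far_swap_long_prefix[of n j] right_absorb j M by blast
  next
    assume "n \<le> length S"
    then show ?thesis
      using prod_list1_far_swap_long_suffix[of n i] left_absorb i M by blast
  qed
qed

theorem lemma4p2:
  fixes smult :: "'f::field \<Rightarrow> 'a::ring \<Rightarrow> 'a"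
    and q :: 'f and n :: nat and \<sigma> :: "nat \<Rightarrow> nat"
  assumes alg: "algebra_over smult"
    and q: "q \<noteq> 1"
    and perm: "\<sigma> permutes {1..n}"
    and s1: "\<sigma> 1 \<noteq> 1" and sn: "\<sigma> n \<noteq> n"
    and ident: "\<forall>x :: nat \<Rightarrow> 'a.
                  wprod x [1..<Suc n] = smult q (wprod x (map \<sigma> [1..<Suc n]))"
  shows "\<exists>k\<ge>2. \<forall>\<tau>. \<tau> permutes {1..k} \<longrightarrow>
           (\<forall>x :: nat \<Rightarrow> 'a. wprod x [1..<Suc k] = wprod x (map \<tau> [1..<Suc k]))"
proof (cases "q = 0")
  case True
  have "2 \<le> n"
    using permutes_not_in[OF perm, of 1] permutes_in_image[OF perm, of 1] s1 by fastforce
  moreover have "wprod x [1..<Suc n] = 0" for x :: "nat \<Rightarrow> 'a"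
    using ident[rule_format, of x] True algebra_over_smult_zero[OF alg] by simp
  ultimately show ?thesis by (auto simp: wprod_map)
next
  case False
  have far_swap: "prod_list1 (P @ b # M @ c # S) = prod_list1 (P @ c # M @ b # S)"
    if "n \<le> length M" "n \<le> length P \<or> n \<le> length S" for P M S :: "'a list" and b c
    using identity_far_swap[OF alg False perm s1 sn ident that] .
  have "wprod x [1..<Suc (4 * n + 3)] = wprod x (map \<tau> [1..<Suc (4 * n + 3)])"
    if "\<tau> permutes {1..4 * n + 3}" for \<tau> and x :: "nat \<Rightarrow> 'a"
    using wprod_permutes_invariant[OF far_swap that]
    by (simp add: wprod_map del: upt_Suc)
  then show ?thesis by (intro exI[of _ "4 * n + 3"]) auto
qed

end
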